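(* Let $T>0$, let $H(t,p)\in C^1([0,T]\times\mathbb{R}^n)$, and let $\sigma$ be convex and Lipschitz on $\mathbb{R}^n$. Let $t_+\in(0,T)$ be such that $H$ satisfies condition (A2) on $[0,t_+]\times\mathbb{R}^n$ and on $[t_+,T]\times\mathbb{R}^n$. Then the function $$u(t,x)=\begin{cases}\Big(\sigma^*+\int_0^tH(\tau,\cdot)\,d\tau\Big)^*(x), & (t,x)\in[0,t_+]\times\mathbb{R}^n,\\[1ex] \Big(\omega^*+\int_{t_+}^tH(\tau,\cdot)\,d\tau\Big)^*(x), & (t,x)\in[t_+,T]\times\mathbb{R}^n,\end{cases}$$ where $\omega(x)=u(t_+,x)=\big(\sigma^*+\int_0^{t_+}H(\tau,\cdot)d\tau\big)^*(x)$, is semiconvex (with linear modulus) on $\Omega=(0,T)\times\mathbb{R}^n$.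
   Context: For $f:\mathbb{R}^n\to\mathbb{R}\cup\{+\infty\}$, $f^*(y)=\sup_{q\in\mathbb{R}^n}\{\langle y,q\rangle-f(q)\}$ is the Fenchel conjugate. Condition (A2) on $[a,b]\times\mathbb{R}^n$: either (a) $H(t,\cdot)$ is convex for all $t\in[a,b]$, or concave for all $t\in[a,b]$; or (b) $H(t,p)=g(t)h(p)+k(t)$ for some functions $g,h,k$ with $g$ not changing sign on $[a,b]$. A function $v:\Omega\to\mathbb{R}$ is semiconvex with linear modulus if there is a constant $C>0$ such that $v(\lambda y_1+(1-\lambda)y_2)-\lambda v(y_1)-(1-\lambda)v(y_2)\le\lambda(1-\lambda)\frac C2|y_1-y_2|^2$ for all $y_1=(t_1,x_1),y_2=(t_2,x_2)\in\Omega$ and all $\lambda\in[0,1]$. *)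

theory Defs
  imports "HOL-Analysis.Analysis"
begin

definition fenchel :: "('a::euclidean_space \<Rightarrow> ereal) \<Rightarrow> 'a \<Rightarrow> ereal" where
  "fenchel f y = (SUP q. ereal (y \<bullet> q) - f q)"

definition C1_on :: "('a::real_normed_vector) set \<Rightarrow> ('a \<Rightarrow> real) \<Rightarrow> bool" where
  "C1_on S f \<longleftrightarrow> (\<exists>f'. (\<forall>z\<in>S. (f has_derivative blinfun_apply (f' z)) (at z within S))
                     \<and> continuous_on S f')"

definition cond_A2 :: "(real \<times> 'a::euclidean_space \<Rightarrow> real) \<Rightarrow> real \<Rightarrow> real \<Rightarrow> bool" where
  "cond_A2 H a b \<longleftrightarrow>
     (\<forall>t\<in>{a..b}. convex_on UNIV (\<lambda>p. H (t, p))) \<or>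
     (\<forall>t\<in>{a..b}. concave_on UNIV (\<lambda>p. H (t, p))) \<or>
     (\<exists>g h k. (\<forall>t\<in>{a..b}. \<forall>p. H (t, p) = g t * h p + k t) \<and>
              ((\<forall>t\<in>{a..b}. g t \<ge> 0) \<or> (\<forall>t\<in>{a..b}. g t \<le> 0)))"

definition semiconvex_lin :: "('a::real_normed_vector) set \<Rightarrow> ('a \<Rightarrow> real) \<Rightarrow> bool" where
  "semiconvex_lin \<Omega> v \<longleftrightarrow> (\<exists>C>0. \<forall>y1\<in>\<Omega>. \<forall>y2\<in>\<Omega>. \<forall>l\<in>{0..1}.
      v (l *\<^sub>R y1 + (1 - l) *\<^sub>R y2) - l * v y1 - (1 - l) * v y2
        \<le> l * (1 - l) * (C / 2) * (norm (y1 - y2))\<^sup>2)"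

end

theory Submission
  imports Defs
begin

text \<open>
  Since \<sigma> is \<open>L\<close>-Lipschitz, the suprema defining \<open>u\<close> only involve momenta \<open>|y| \<le> L\<close>.
  On that compact set of momenta \<open>H\<close> is bounded and Lipschitz in time with some constant \<open>B\<close>,
  so \<open>K t y = \<integral>\<^sub>0\<^sup>t H(\<tau>, y) d\<tau>\<close> is bounded and \<open>B/2 t\<^sup>2 - K t y\<close> is convex in \<open>t\<close>.
  On each time slab \<open>u\<close> is a supremum of the functions \<open>x \<bullet> y - \<sigma>\<^sup>*(y) - K t y\<close>, each of which
  becomes convex after adding \<open>B/2 |(t, x)|\<^sup>2\<close>; hence \<open>u + B/2 |(t, x)|\<^sup>2\<close> is convex on
  \<open>[0, t\<^sub>+]\<close> and on \<open>[t\<^sub>+, T]\<close>. The first-stage formula continued beyond \<open>t\<^sub>+\<close> is a convex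
  minorant of \<open>u\<close> (because \<open>\<omega>\<^sup>* \<le> \<sigma>\<^sup>* + K t\<^sub>+\<close>) that agrees with \<open>u\<close> at \<open>t = t\<^sub>+\<close>, and a
  function that is convex on both sides of a hyperplane and admits such a minorant is convex.
\<close>

section \<open>Fenchel conjugation\<close>

lemma fenchel_upper: "ereal (y \<bullet> q) - f q \<le> fenchel f y"
  unfolding fenchel_def by (rule SUP_upper) simp

lemma fenchel_antimono:
  assumes "\<And>y. f y \<le> g y"
  shows "fenchel g x \<le> fenchel f x"
  unfolding fenchel_def using assms by (intro SUP_mono) (auto intro: ereal_minus_mono)

lemma fenchel_fenchel_le: "fenchel (fenchel f) y \<le> f y"
  unfolding fenchel_def[of "fenchel f"]
proof (rule SUP_least)
  fix z
  have "ereal (y \<bullet> z) - f y \<le> fenchel f z"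
    using fenchel_upper[of z y f] by (simp add: inner_commute)
  then show "ereal (y \<bullet> z) - fenchel f z \<le> f y"
    by (cases "f y"; cases "fenchel f z") auto
qed

lemma fenchel_fenchel_fenchel: "fenchel (fenchel (fenchel f)) = fenchel f"
proof
  fix x
  show "fenchel (fenchel (fenchel f)) x = fenchel f x"
    by (intro antisym fenchel_fenchel_le fenchel_antimono)
qed

section \<open>Convexity\<close>

lemma convex_on_cong:
  assumes "convex_on S f" and "\<And>x. x \<in> S \<Longrightarrow> f x = g x"
  shows "convex_on S g"
  using assms unfolding convex_on_def by (auto simp: convex_def)

lemma convex_on_Times_add:
  assumes "convex_on S f" and "convex_on T g"
  shows "convex_on (S \<times> T) (\<lambda>p. f (fst p) + g (snd p))"
proof -
  have "convex_on (S \<times> T) (\<lambda>p. f (fst p))" "convex_on (S \<times> T) (\<lambda>p. g (snd p))"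
    using assms by (auto simp: convex_on_def convex_Times)
  then show ?thesis by (rule convex_on_add)
qed

lemma norm_convex_combination_sq:
  fixes a b :: "'a::real_inner"
  shows "l * (norm a)\<^sup>2 + (1 - l) * (norm b)\<^sup>2 - (norm (l *\<^sub>R a + (1 - l) *\<^sub>R b))\<^sup>2
       = l * (1 - l) * (norm (a - b))\<^sup>2"
  unfolding power2_norm_eq_inner
  by (simp add: inner_add_left inner_add_right inner_diff_left inner_diff_right inner_commute
      algebra_simps)

lemma convex_on_norm_sq: "convex_on UNIV (\<lambda>x::'a::real_inner. (norm x)\<^sup>2)"
proof (rule convex_onI)
  fix t :: real and x y :: 'a
  assume "0 < t" "t < 1"
  then have "0 \<le> (1 - t) * (1 - (1 - t)) * (norm (x - y))\<^sup>2" by simp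
  then show "(norm ((1 - t) *\<^sub>R x + t *\<^sub>R y))\<^sup>2 \<le> (1 - t) * (norm x)\<^sup>2 + t * (norm y)\<^sup>2"
    using norm_convex_combination_sq[of "1 - t" x y] by simp
qed simp

lemma convex_on_inner_minus_const: "convex_on UNIV (\<lambda>x. x \<bullet> y - c)"
  by (rule convex_onI) (auto simp: inner_add_left algebra_simps)

lemma convex_on_cSup_add:
  assumes "Y \<noteq> {}"
    and bdd: "\<And>x. x \<in> S \<Longrightarrow> bdd_above ((\<lambda>y. f y x) ` Y)"
    and cvx: "\<And>y. y \<in> Y \<Longrightarrow> convex_on S (\<lambda>x. f y x + g x)"
  shows "convex_on S (\<lambda>x. Sup ((\<lambda>y. f y x) ` Y) + g x)"
proof (rule convex_onI)
  show "convex S" using assms(1) cvx convex_on_imp_convex by blast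
  fix t :: real and x z
  assume t: "0 < t" "t < 1" and xz: "x \<in> S" "z \<in> S"
  define m where "m = (1 - t) *\<^sub>R x + t *\<^sub>R z"
  have "f y m \<le> (1 - t) * (Sup ((\<lambda>y. f y x) ` Y) + g x)
                 + t * (Sup ((\<lambda>y. f y z) ` Y) + g z) - g m" if y: "y \<in> Y" for y
  proof -
    have "f y m + g m \<le> (1 - t) * (f y x + g x) + t * (f y z + g z)"
      using convex_onD[OF cvx[OF y], of t x z] t xz unfolding m_def by simp
    moreover have "f y x \<le> Sup ((\<lambda>y. f y x) ` Y)" "f y z \<le> Sup ((\<lambda>y. f y z) ` Y)"
      using y bdd xz by (auto intro: cSup_upper)
    ultimately show ?thesis
      using t by (smt (verit, best) mult_left_mono)
  qed
  then have "Sup ((\<lambda>y. f y m) ` Y) \<le> (1 - t) * (Sup ((\<lambda>y. f y x) ` Y) + g x)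
                 + t * (Sup ((\<lambda>y. f y z) ` Y) + g z) - g m"
    using assms(1) by (intro cSup_least) auto
  then show "Sup ((\<lambda>y. f y m) ` Y) + g m
      \<le> (1 - t) * (Sup ((\<lambda>y. f y x) ` Y) + g x) + t * (Sup ((\<lambda>y. f y z) ` Y) + g z)"
    by simp
qed

lemma semiconvex_lin_if_convex_plus_sq:
  fixes v :: "'a::real_inner \<Rightarrow> real"
  assumes "0 < C" and "convex_on \<Omega> (\<lambda>y. v y + C / 2 * (norm y)\<^sup>2)"
  shows "semiconvex_lin \<Omega> v"
  unfolding semiconvex_lin_def
proof (intro exI[of _ C] conjI ballI)
  fix y1 y2 and l :: real assume y: "y1 \<in> \<Omega>" "y2 \<in> \<Omega>" and l: "l \<in> {0..1}"
  define m where "m = l *\<^sub>R y1 + (1 - l) *\<^sub>R y2"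
  have "v m + C / 2 * (norm m)\<^sup>2
      \<le> l * (v y1 + C / 2 * (norm y1)\<^sup>2) + (1 - l) * (v y2 + C / 2 * (norm y2)\<^sup>2)"
    using assms(2) y l unfolding convex_on_def m_def by simp
  then have "v m - l * v y1 - (1 - l) * v y2
      \<le> C / 2 * (l * (norm y1)\<^sup>2 + (1 - l) * (norm y2)\<^sup>2 - (norm m)\<^sup>2)"
    by (simp add: field_simps)
  also have "\<dots> = l * (1 - l) * (C / 2) * (norm (y1 - y2))\<^sup>2"
    unfolding m_def norm_convex_combination_sq by simp
  finally show "v (l *\<^sub>R y1 + (1 - l) *\<^sub>R y2) - l * v y1 - (1 - l) * v y2
      \<le> l * (1 - l) * (C / 2) * (norm (y1 - y2))\<^sup>2"
    unfolding m_def .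
qed (use assms in simp)

lemma convex_combination_le_if_le_at_point:
  fixes h :: "'a::real_vector \<Rightarrow> real" and p q :: 'a and \<mu> l :: real
  defines "m \<equiv> \<mu> *\<^sub>R p + (1 - \<mu>) *\<^sub>R q"
  assumes "0 \<le> \<mu>" "\<mu> \<le> l" "l \<le> 1" "\<mu> < 1"
    and at_m: "h m \<le> \<mu> * h p + (1 - \<mu>) * h q"
    and segment: "\<And>\<alpha>. 0 \<le> \<alpha> \<Longrightarrow> \<alpha> \<le> 1 \<Longrightarrow> h (\<alpha> *\<^sub>R p + (1 - \<alpha>) *\<^sub>R m) \<le> \<alpha> * h p + (1 - \<alpha>) * h m"
  shows "h (l *\<^sub>R p + (1 - l) *\<^sub>R q) \<le> l * h p + (1 - l) * h q"
proof -
  define \<alpha> where "\<alpha> = (l - \<mu>) / (1 - \<mu>)"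
  have \<alpha>: "0 \<le> \<alpha>" "\<alpha> \<le> 1" using assms(2-5) by (auto simp: \<alpha>_def field_simps)
  have "(1 - \<alpha>) * (1 - \<mu>) = 1 - l"
    using \<open>\<mu> < 1\<close> by (simp add: \<alpha>_def field_simps)
  moreover have "\<alpha> + (1 - \<alpha>) * \<mu> = 1 - (1 - \<alpha>) * (1 - \<mu>)" by (simp add: algebra_simps)
  ultimately have weights: "(1 - \<alpha>) * (1 - \<mu>) = 1 - l" "\<alpha> + (1 - \<alpha>) * \<mu> = l" by simp_all
  have "l *\<^sub>R p + (1 - l) *\<^sub>R q = \<alpha> *\<^sub>R p + (1 - \<alpha>) *\<^sub>R m"
    unfolding m_def weights[symmetric] by (simp add: algebra_simps)
  then have "h (l *\<^sub>R p + (1 - l) *\<^sub>R q) \<le> \<alpha> * h p + (1 - \<alpha>) * h m"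
    using segment[OF \<alpha>] by simp
  also have "\<dots> \<le> \<alpha> * h p + (1 - \<alpha>) * (\<mu> * h p + (1 - \<mu>) * h q)"
    using at_m \<alpha> by (intro add_left_mono mult_left_mono) auto
  also have "\<dots> = l * h p + (1 - l) * h q"
    unfolding weights[symmetric] by (simp add: algebra_simps)
  finally show ?thesis .
qed

lemma convex_on_glue_crossing:
  fixes h F :: "real \<times> 'a::real_vector \<Rightarrow> real"
  assumes S: "convex S"
    and hL: "convex_on (S \<inter> {p. fst p \<le> c}) h"
    and hR: "convex_on (S \<inter> {p. c \<le> fst p}) h"
    and F: "convex_on S F"
    and Fh: "\<And>p. p \<in> S \<Longrightarrow> F p \<le> h p"
    and Fc: "\<And>p. p \<in> S \<Longrightarrow> fst p = c \<Longrightarrow> F p = h p"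
    and p: "p \<in> S" "fst p < c" and q: "q \<in> S" "c < fst q"
    and l: "0 \<le> l" "l \<le> 1"
  shows "h (l *\<^sub>R p + (1 - l) *\<^sub>R q) \<le> l * h p + (1 - l) * h q"
proof -
  define \<mu> where "\<mu> = (fst q - c) / (fst q - fst p)"
  define m where "m = \<mu> *\<^sub>R p + (1 - \<mu>) *\<^sub>R q"
  have \<mu>: "0 < \<mu>" "\<mu> < 1" using p q by (auto simp: \<mu>_def field_simps)
  have "m \<in> S" using S p q \<mu> unfolding m_def convex_def by simp
  moreover have "fst m = fst q - \<mu> * (fst q - fst p)" by (simp add: m_def algebra_simps)
  then have "fst m = c" using p q by (simp add: \<mu>_def)
  ultimately have m: "m \<in> S" "fst m = c" by simp_all
  \<comment> \<open>The segment from p to q crosses the gluing hyperplane at m, where h agrees with the convex minorant F.\<close>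
  have "h m = F m" using Fc[OF m] by simp
  also have "\<dots> \<le> \<mu> * F p + (1 - \<mu>) * F q"
    using F p q \<mu> unfolding convex_on_def m_def by simp
  also have "\<dots> \<le> \<mu> * h p + (1 - \<mu>) * h q"
    using Fh[OF p(1)] Fh[OF q(1)] \<mu> by (intro add_mono mult_left_mono) auto
  finally have at_m: "h m \<le> \<mu> * h p + (1 - \<mu>) * h q" .
  show ?thesis
  proof (cases "\<mu> \<le> l")
    case True
    show ?thesis
    proof (rule convex_combination_le_if_le_at_point[OF _ True l(2) \<mu>(2)])
      show "h (\<mu> *\<^sub>R p + (1 - \<mu>) *\<^sub>R q) \<le> \<mu> * h p + (1 - \<mu>) * h q"
        using at_m by (simp add: m_def)
      show "h (\<alpha> *\<^sub>R p + (1 - \<alpha>) *\<^sub>R (\<mu> *\<^sub>R p + (1 - \<mu>) *\<^sub>R q))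
          \<le> \<alpha> * h p + (1 - \<alpha>) * h (\<mu> *\<^sub>R p + (1 - \<mu>) *\<^sub>R q)" if "0 \<le> \<alpha>" "\<alpha> \<le> 1" for \<alpha>
        using convex_onD[OF hL, of "1 - \<alpha>" p m] that p m unfolding m_def by (simp add: add.commute)
    qed (use \<mu> in simp)
  next
    case False
    have "h ((1 - l) *\<^sub>R q + (1 - (1 - l)) *\<^sub>R p) \<le> (1 - l) * h q + (1 - (1 - l)) * h p"
    proof (rule convex_combination_le_if_le_at_point[where \<mu> = "1 - \<mu>"])
      show "h ((1 - \<mu>) *\<^sub>R q + (1 - (1 - \<mu>)) *\<^sub>R p) \<le> (1 - \<mu>) * h q + (1 - (1 - \<mu>)) * h p"
        using at_m by (simp add: m_def algebra_simps)
      show "h (\<alpha> *\<^sub>R q + (1 - \<alpha>) *\<^sub>R ((1 - \<mu>) *\<^sub>R q + (1 - (1 - \<mu>)) *\<^sub>R p))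
          \<le> \<alpha> * h q + (1 - \<alpha>) * h ((1 - \<mu>) *\<^sub>R q + (1 - (1 - \<mu>)) *\<^sub>R p)" if "0 \<le> \<alpha>" "\<alpha> \<le> 1" for \<alpha>
        using convex_onD[OF hR, of "1 - \<alpha>" q m] that q m unfolding m_def by (simp add: algebra_simps)
    qed (use False l \<mu> in auto)
    then show ?thesis by (simp add: add.commute)
  qed
qed

lemma convex_on_glue:
  fixes h F :: "real \<times> 'a::real_vector \<Rightarrow> real"
  assumes S: "convex S"
    and hL: "convex_on (S \<inter> {p. fst p \<le> c}) h"
    and hR: "convex_on (S \<inter> {p. c \<le> fst p}) h"
    and F: "convex_on S F"
    and Fh: "\<And>p. p \<in> S \<Longrightarrow> F p \<le> h p"
    and Fc: "\<And>p. p \<in> S \<Longrightarrow> fst p = c \<Longrightarrow> F p = h p"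
  shows "convex_on S h"
proof (rule convex_onI[OF _ S])
  fix t :: real and x y assume t: "0 < t" "t < 1" and xy: "x \<in> S" "y \<in> S"
  show "h ((1 - t) *\<^sub>R x + t *\<^sub>R y) \<le> (1 - t) * h x + t * h y"
  proof (cases "fst x \<le> c \<and> fst y \<le> c")
    case True
    then show ?thesis using hL xy t unfolding convex_on_def by simp
  next
    case nL: False
    show ?thesis
    proof (cases "c \<le> fst x \<and> c \<le> fst y")
      case True
      then show ?thesis using hR xy t unfolding convex_on_def by simp
    next
      case False
      then consider "fst x < c" "c < fst y" | "fst y < c" "c < fst x" using nL by linarith
      then show ?thesis
      proof cases
        case 1
        have "h ((1-t) *\<^sub>R x + (1-(1-t)) *\<^sub>R y) \<le> (1-t) * h x + (1-(1-t)) * h y"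
          by (rule convex_on_glue_crossing[OF S hL hR F Fh Fc xy(1) 1(1) xy(2) 1(2)]) (use t in auto)
        then show ?thesis by simp
      next
        case 2
        have "h (t *\<^sub>R y + (1-t) *\<^sub>R x) \<le> t * h y + (1-t) * h x"
          by (rule convex_on_glue_crossing[OF S hL hR F Fh Fc xy(2) 2(1) xy(1) 2(2)]) (use t in auto)
        then show ?thesis by (simp add: add.commute)
      qed
    qed
  qed
qed

lemma convex_on_affine_minorant:
  fixes f :: "'a::euclidean_space \<Rightarrow> real"
  assumes "convex_on UNIV f" and "continuous_on UNIV f"
  obtains y c where "\<And>q. y \<bullet> q - c \<le> f q"
proof -
  have "continuous_on UNIV (\<lambda>z::'a \<times> real. f (fst z))"
    by (rule continuous_on_compose2[OF assms(2)]) (auto intro: continuous_intros)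
  then have "closed (epigraph UNIV f)"
    unfolding epigraph_def by (simp add: closed_Collect_le continuous_on_snd)
  moreover have "(0, f 0 - 1) \<notin> epigraph UNIV f" by (simp add: epigraph_def)
  ultimately obtain a b where ab: "a \<bullet> (0, f 0 - 1) < b" "\<forall>z\<in>epigraph UNIV f. b < a \<bullet> z"
    using separating_hyperplane_closed_point[OF convex_epigraphI[OF assms(1)]] by blast
  obtain a1 :: 'a and a2 :: real where a: "a = (a1, a2)" by (cases a)
  have above: "b < a1 \<bullet> q + a2 * r" if "f q \<le> r" for q r
    using ab(2) that unfolding a epigraph_def by auto
  have "0 < a2"
    using ab(1) above[of 0 "f 0"] unfolding a by (simp add: algebra_simps)
  show ?thesis
  proof (rule that[of "- (1 / a2) *\<^sub>R a1" "- b / a2"])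
    fix q
    have "(b - a1 \<bullet> q) / a2 < f q"
      using above[of q "f q"] \<open>0 < a2\<close> by (simp add: field_simps)
    then show "(- (1 / a2) *\<^sub>R a1) \<bullet> q - - b / a2 \<le> f q"
      by (simp add: diff_divide_distrib)
  qed
qed

section \<open>Time integrals of a \<open>C\<^sup>1\<close> Hamiltonian\<close>

lemma C1_on_imp_continuous_on: "C1_on S H \<Longrightarrow> continuous_on S H"
  unfolding C1_on_def by (auto intro: has_derivative_continuous_on)

lemma C1_on_lipschitz_on:
  assumes "C1_on S H" and "K \<subseteq> S" "compact K" "convex K"
  obtains B where "0 < B" "B-lipschitz_on K H"
proof -
  obtain H' where H': "\<And>z. z \<in> S \<Longrightarrow> (H has_derivative blinfun_apply (H' z)) (at z within S)"
    and H'_cont: "continuous_on S H'"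
    using assms(1) unfolding C1_on_def by blast
  have "bounded (H' ` K)"
    using assms(3) continuous_on_subset[OF H'_cont assms(2)]
    by (intro compact_imp_bounded compact_continuous_image)
  then obtain B where B: "\<And>z. z \<in> K \<Longrightarrow> norm (H' z) \<le> B" "0 < B"
    unfolding bounded_pos by auto
  have "norm (H z - H w) \<le> B * norm (z - w)" if "z \<in> K" "w \<in> K" for z w
  proof (rule differentiable_bound[OF \<open>convex K\<close> _ _ that])
    show "(H has_derivative blinfun_apply (H' x)) (at x within K)" if "x \<in> K" for x
      using H' assms(2) that by (auto intro: has_derivative_subset[of _ _ _ S])
    show "onorm (blinfun_apply (H' x)) \<le> B" if "x \<in> K" for x
      using B(1)[OF that] by (simp add: norm_blinfun.rep_eq)
  qed
  then have "B-lipschitz_on K H"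
    using B(2) by (intro lipschitz_onI) (auto simp: dist_norm)
  with B(2) show ?thesis by (rule that)
qed

lemma convex_on_sq_minus_integral:
  fixes h :: "real \<Rightarrow> real"
  assumes "a \<le> b" and "0 \<le> B" and h_cont: "continuous_on {a..b} h"
    and h_slope: "\<And>s t. s \<in> {a..b} \<Longrightarrow> t \<in> {a..b} \<Longrightarrow> s \<le> t \<Longrightarrow> h t - h s \<le> B * (t - s)"
  shows "convex_on {a..b} (\<lambda>t. B / 2 * t\<^sup>2 - integral {a..t} h)"
proof -
  \<comment> \<open>Extend h constantly beyond the interval, so that a derivative is available at the endpoints.\<close>
  define g where "g = (\<lambda>\<tau>. h (max a (min b \<tau>)))"
  have g_cont: "continuous_on UNIV g"
    unfolding g_def using \<open>a \<le> b\<close>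
    by (intro continuous_on_compose2[OF h_cont]) (auto intro!: continuous_intros)
  define P where "P = (\<lambda>t. integral {a - 1..t} g)"
  have P_deriv: "(P has_real_derivative g t) (at t)" if "t \<in> {a - 1<..<b + 1}" for t
  proof -
    have "(P has_real_derivative g t) (at t within {a - 1..b + 1})"
      unfolding P_def using that
      by (intro integral_has_real_derivative continuous_on_subset[OF g_cont]) auto
    moreover have "at t within {a - 1..b + 1} = at t"
      using that by (intro at_within_interior) simp
    ultimately show ?thesis by simp
  qed
  have g_slope: "g t - g s \<le> B * (t - s)" if "s \<le> t" for s t
  proof -
    have "g t - g s \<le> B * (max a (min b t) - max a (min b s))"
      unfolding g_def using \<open>a \<le> b\<close> that by (intro h_slope) auto
    also have "\<dots> \<le> B * (t - s)"
      using \<open>0 \<le> B\<close> that by (intro mult_left_mono) auto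
    finally show ?thesis .
  qed
  have "convex_on {a - 1<..<b + 1} (\<lambda>t. B / 2 * t\<^sup>2 - P t)"
  proof (rule convex_on_realI[where f' = "\<lambda>t. B * t - g t"])
    show "((\<lambda>t. B / 2 * t\<^sup>2 - P t) has_real_derivative B * t - g t) (at t)"
      if "t \<in> {a - 1<..<b + 1}" for t
      using P_deriv[OF that] by (auto intro!: derivative_eq_intros)
    show "B * s - g s \<le> B * t - g t" if "s \<le> t" for s t
      using g_slope[OF that] by (simp add: algebra_simps)
  qed simp
  then have "convex_on {a..b} (\<lambda>t. B / 2 * t\<^sup>2 - P t)"
    by (rule convex_on_subset) auto
  then have shifted: "convex_on {a..b} (\<lambda>t. B / 2 * t\<^sup>2 - P t + P a)"
    by (rule convex_on_add) (simp add: convex_on_const)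
  have P_diff: "P t - P a = integral {a..t} h" if "t \<in> {a..b}" for t
  proof -
    have "g integrable_on {a - 1..t}"
      by (intro integrable_continuous_real continuous_on_subset[OF g_cont]) simp
    then have "P t - P a = integral {a..t} g"
      unfolding P_def using that
      by (simp add: Henstock_Kurzweil_Integration.integral_combine[of "a - 1" a t g, symmetric])
    also have "\<dots> = integral {a..t} h"
      using that by (intro integral_cong) (auto simp: g_def)
    finally show ?thesis .
  qed
  show ?thesis
    by (rule convex_on_cong[OF shifted]) (simp add: P_diff[symmetric])
qed

lemma C1_on_time_integral_bounds:
  fixes H :: "real \<times> 'a::euclidean_space \<Rightarrow> real"
  assumes "C1_on ({a..b} \<times> UNIV) H" and "a \<le> b"
  obtains B M where "0 < B"
    and "\<And>t y. t \<in> {a..b} \<Longrightarrow> norm y \<le> L \<Longrightarrow> \<bar>integral {a..t} (\<lambda>\<tau>. H (\<tau>, y))\<bar> \<le> M"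
    and "\<And>y. norm y \<le> L \<Longrightarrow> convex_on {a..b} (\<lambda>t. B / 2 * t\<^sup>2 - integral {a..t} (\<lambda>\<tau>. H (\<tau>, y)))"
proof -
  define R where "R = {a..b} \<times> cball (0::'a) L"
  have R: "R \<subseteq> {a..b} \<times> UNIV" "compact R" "convex R"
    unfolding R_def by (auto intro: compact_Times convex_Times)
  obtain B where "0 < B" and B: "B-lipschitz_on R H"
    using assms(1) R by (rule C1_on_lipschitz_on)
  have H_cont: "continuous_on ({a..b} \<times> UNIV) H" using assms(1) by (rule C1_on_imp_continuous_on)
  then have "bounded (H ` R)"
    using R by (intro compact_imp_bounded compact_continuous_image) (auto intro: continuous_on_subset)
  then obtain M where M: "\<And>z. z \<in> R \<Longrightarrow> \<bar>H z\<bar> \<le> M"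
    unfolding bounded_iff by auto
  have H_time_cont: "continuous_on {a..b} (\<lambda>\<tau>. H (\<tau>, y))" for y :: 'a
    by (rule continuous_on_compose2[OF H_cont]) (auto intro: continuous_intros)
  show ?thesis
  proof (rule that[OF \<open>0 < B\<close>, of "(b - a) * M"])
    fix t and y :: 'a assume t: "t \<in> {a..b}" and y: "norm y \<le> L"
    have "norm (integral {a..t} (\<lambda>\<tau>. H (\<tau>, y))) \<le> M * (t - a)"
      using t y by (intro integral_bound continuous_on_subset[OF H_time_cont]) (auto intro!: M simp: R_def)
    also have "\<dots> \<le> (b - a) * M"
      using t M[of "(a, y)"] y by (auto simp: R_def mult.commute intro!: mult_left_mono)
    finally show "\<bar>integral {a..t} (\<lambda>\<tau>. H (\<tau>, y))\<bar> \<le> (b - a) * M" by simp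
  next
    fix y :: 'a assume y: "norm y \<le> L"
    show "convex_on {a..b} (\<lambda>t. B / 2 * t\<^sup>2 - integral {a..t} (\<lambda>\<tau>. H (\<tau>, y)))"
    proof (rule convex_on_sq_minus_integral[OF \<open>a \<le> b\<close> _ H_time_cont])
      show "0 \<le> B" using \<open>0 < B\<close> by simp
      fix s t assume "s \<in> {a..b}" "t \<in> {a..b}" "s \<le> t"
      then have "dist (H (t, y)) (H (s, y)) \<le> B * dist (t, y) (s, y)"
        using y by (intro lipschitz_onD[OF B]) (auto simp: R_def)
      then show "H (t, y) - H (s, y) \<le> B * (t - s)"
        using \<open>s \<le> t\<close> by (simp add: dist_real_def dist_Pair_Pair)
    qed
  qed
qed

lemma C1_on_time_integral_diff:
  fixes H :: "real \<times> 'a::real_normed_vector \<Rightarrow> real"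
  assumes "C1_on ({a..b} \<times> UNIV) H" and "s \<in> {a..b}" and "t \<in> {s..b}"
  shows "integral {s..t} (\<lambda>\<tau>. H (\<tau>, y))
       = integral {a..t} (\<lambda>\<tau>. H (\<tau>, y)) - integral {a..s} (\<lambda>\<tau>. H (\<tau>, y))"
proof -
  have "continuous_on {a..t} (\<lambda>\<tau>. H (\<tau>, y))"
    using assms(3) by (intro continuous_on_compose2[OF C1_on_imp_continuous_on[OF assms(1)]])
      (auto intro!: continuous_intros)
  then show ?thesis
    using assms(2,3) Henstock_Kurzweil_Integration.integral_combine[of a s t "\<lambda>\<tau>. H (\<tau>, y)"]
    by (simp add: integrable_continuous_real)
qed

section \<open>The Hopf formula\<close>

definition conj_dom :: "('a::euclidean_space \<Rightarrow> real) \<Rightarrow> 'a set" where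
  "conj_dom f = {y. fenchel (\<lambda>q. ereal (f q)) y \<noteq> \<infinity>}"

text \<open>The Hopf formula \<open>(f\<^sup>* + K)\<^sup>*\<close>, written as a real supremum over the effective domain
  of \<open>f\<^sup>*\<close>.\<close>
definition hopf :: "('a::euclidean_space \<Rightarrow> real) \<Rightarrow> ('a \<Rightarrow> real) \<Rightarrow> 'a \<Rightarrow> real" where
  "hopf f K x = (SUP y\<in>conj_dom f. x \<bullet> y - real_of_ereal (fenchel (\<lambda>q. ereal (f q)) y) - K y)"

text \<open>The cone majorant confines the effective domain of \<open>f\<^sup>*\<close> to the closed \<open>L\<close>-ball,
  the affine minorant makes \<open>f\<^sup>*\<close> finite somewhere.\<close>
locale hopf_datum =
  fixes f :: "'a::euclidean_space \<Rightarrow> real" and L :: real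
  assumes L_nonneg: "0 \<le> L"
    and cone_majorant: "\<exists>A. \<forall>q. f q \<le> A + L * norm q"
    and affine_minorant: "\<exists>y c. \<forall>q. y \<bullet> q - c \<le> f q"
begin

abbreviation f_conj :: "'a \<Rightarrow> ereal" where
  "f_conj \<equiv> fenchel (\<lambda>q. ereal (f q))"

lemma f_conj_eq_PInf:
  assumes "L < norm y"
  shows "f_conj y = \<infinity>"
  unfolding fenchel_def
proof (rule SUP_PInfty)
  fix n :: nat
  obtain A where A: "\<And>q. f q \<le> A + L * norm q" using cone_majorant by blast
  define s where "s = (real n + \<bar>A\<bar>) / (norm y - L)"
  define q where "q = (s / norm y) *\<^sub>R y"
  have "0 < norm y" "0 \<le> s" using assms L_nonneg by (auto simp: s_def)
  then have "y \<bullet> q = s * norm y" "norm q = s"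
    by (auto simp: q_def power2_norm_eq_inner[symmetric] power2_eq_square)
  moreover have "s * (norm y - L) = real n + \<bar>A\<bar>" using assms by (simp add: s_def)
  ultimately have "real n \<le> y \<bullet> q - f q"
    using A[of q] by (simp add: algebra_simps)
  then show "\<exists>q\<in>UNIV. ereal (real n) \<le> ereal (y \<bullet> q) - ereal (f q)" by auto
qed

lemma norm_le_if_in_conj_dom: "y \<in> conj_dom f \<Longrightarrow> norm y \<le> L"
  using f_conj_eq_PInf by (force simp: conj_dom_def)

lemma conj_dom_nonempty: "conj_dom f \<noteq> {}"
proof -
  obtain y c where "\<And>q. y \<bullet> q - c \<le> f q" using affine_minorant by blast
  then have "f_conj y \<le> ereal c"
    unfolding fenchel_def by (intro SUP_least) (simp add: algebra_simps)
  then have "y \<in> conj_dom f" by (auto simp: conj_dom_def)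
  then show ?thesis by blast
qed

lemma f_conj_ge: "ereal (- f 0) \<le> f_conj y"
  using fenchel_upper[of y 0 "\<lambda>q. ereal (f q)"] by simp

lemma f_conj_real:
  assumes "y \<in> conj_dom f"
  shows "f_conj y = ereal (real_of_ereal (f_conj y))" and "- f 0 \<le> real_of_ereal (f_conj y)"
  using assms f_conj_ge[of y] by (cases "f_conj y"; auto simp: conj_dom_def)+

context
  fixes K :: "'a \<Rightarrow> real" and N :: real
  assumes K_bound: "\<And>y. norm y \<le> L \<Longrightarrow> \<bar>K y\<bar> \<le> N"
begin

lemma hopf_term_le:
  assumes "y \<in> conj_dom f"
  shows "x \<bullet> y - real_of_ereal (f_conj y) - K y \<le> f 0 + N + L * norm x"
proof -
  have "norm y \<le> L" using assms by (rule norm_le_if_in_conj_dom)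
  then have "x \<bullet> y \<le> L * norm x"
    using norm_cauchy_schwarz[of x y] by (metis mult.commute mult_left_mono norm_ge_zero order_trans)
  then show ?thesis
    using f_conj_real(2)[OF assms] K_bound[OF \<open>norm y \<le> L\<close>] by linarith
qed

lemma bdd_above_hopf: "bdd_above ((\<lambda>y. x \<bullet> y - real_of_ereal (f_conj y) - K y) ` conj_dom f)"
  using hopf_term_le by (intro bdd_aboveI2)

lemma hopf_le: "hopf f K x \<le> f 0 + N + L * norm x"
  unfolding hopf_def using conj_dom_nonempty hopf_term_le by (intro cSup_least) auto

lemma hopf_ge: "y \<in> conj_dom f \<Longrightarrow> x \<bullet> y - real_of_ereal (f_conj y) - K y \<le> hopf f K x"
  unfolding hopf_def using bdd_above_hopf by (intro cSup_upper) auto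

lemma fenchel_conj_plus_eq_hopf: "fenchel (\<lambda>y. f_conj y + ereal (K y)) x = ereal (hopf f K x)"
proof (rule antisym)
  have term_eq: "ereal (x \<bullet> y) - (f_conj y + ereal (K y))
      = ereal (x \<bullet> y - real_of_ereal (f_conj y) - K y)" if "y \<in> conj_dom f" for y
    by (subst f_conj_real(1)[OF that]) simp
  show "fenchel (\<lambda>y. f_conj y + ereal (K y)) x \<le> ereal (hopf f K x)"
    unfolding fenchel_def[of "\<lambda>y. f_conj y + ereal (K y)"]
  proof (rule SUP_least)
    fix y
    show "ereal (x \<bullet> y) - (f_conj y + ereal (K y)) \<le> ereal (hopf f K x)"
      using hopf_ge[of y x] term_eq[of y] by (cases "y \<in> conj_dom f") (auto simp: conj_dom_def)
  qed
  have "ereal (x \<bullet> y - real_of_ereal (f_conj y) - K y) \<le> fenchel (\<lambda>y. f_conj y + ereal (K y)) x"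
    if "y \<in> conj_dom f" for y
    using fenchel_upper[of x y "\<lambda>y. f_conj y + ereal (K y)"] term_eq[OF that] by simp
  then show "ereal (hopf f K x) \<le> fenchel (\<lambda>y. f_conj y + ereal (K y)) x"
    unfolding hopf_def using conj_dom_nonempty bdd_above_hopf
    by (cases "fenchel (\<lambda>y. f_conj y + ereal (K y)) x") (auto intro!: cSup_least)
qed

lemma ereal_hopf_eq_fenchel: "(\<lambda>x. ereal (hopf f K x)) = fenchel (\<lambda>y. f_conj y + ereal (K y))"
  using fenchel_conj_plus_eq_hopf by auto

lemma hopf_datum_hopf: "hopf_datum (hopf f K) L"
proof
  show "0 \<le> L" by (rule L_nonneg)
  show "\<exists>A. \<forall>x. hopf f K x \<le> A + L * norm x"
    using hopf_le by blast
  obtain y where y: "y \<in> conj_dom f" using conj_dom_nonempty by blast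
  show "\<exists>y c. \<forall>x. y \<bullet> x - c \<le> hopf f K x"
    using hopf_ge[OF y] by (intro exI[of _ y] exI[of _ "real_of_ereal (f_conj y) + K y"])
      (simp add: algebra_simps inner_commute)
qed

end

lemma hopf_hopf_zero:
  assumes K: "\<And>y. norm y \<le> L \<Longrightarrow> \<bar>K y\<bar> \<le> N"
  shows "hopf (hopf f K) (\<lambda>_. 0) = hopf f K"
proof
  interpret \<omega>: hopf_datum "hopf f K" L by (rule hopf_datum_hopf[OF K])
  fix x
  have "ereal (hopf (hopf f K) (\<lambda>_. 0) x) = fenchel (\<lambda>y. \<omega>.f_conj y + ereal 0) x"
    by (rule \<omega>.fenchel_conj_plus_eq_hopf[where N = 0, symmetric]) simp
  also have "\<dots> = fenchel (fenchel (fenchel (\<lambda>y. f_conj y + ereal (K y)))) x"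
    by (simp add: ereal_hopf_eq_fenchel[OF K])
  also have "\<dots> = ereal (hopf f K x)"
    by (simp add: fenchel_fenchel_fenchel fenchel_conj_plus_eq_hopf[OF K])
  finally show "hopf (hopf f K) (\<lambda>_. 0) x = hopf f K x" by simp
qed

lemma hopf_le_hopf_hopf:
  assumes K: "\<And>y. norm y \<le> L \<Longrightarrow> \<bar>K y\<bar> \<le> N"
    and K': "\<And>y. norm y \<le> L \<Longrightarrow> \<bar>K' y\<bar> \<le> N'"
  shows "hopf f (\<lambda>y. K y + K' y) x \<le> hopf (hopf f K) K' x"
proof -
  interpret \<omega>: hopf_datum "hopf f K" L by (rule hopf_datum_hopf[OF K])
  have "\<omega>.f_conj y \<le> f_conj y + ereal (K y)" for y
    using fenchel_fenchel_le[of "\<lambda>y. f_conj y + ereal (K y)" y]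
    by (simp add: ereal_hopf_eq_fenchel[OF K])
  then have "\<omega>.f_conj y + ereal (K' y) \<le> f_conj y + ereal (K y + K' y)" for y
    by (metis add.assoc add_right_mono plus_ereal.simps(1))
  then have "fenchel (\<lambda>y. f_conj y + ereal (K y + K' y)) x
      \<le> fenchel (\<lambda>y. \<omega>.f_conj y + ereal (K' y)) x"
    by (rule fenchel_antimono)
  moreover have "\<bar>K y + K' y\<bar> \<le> N + N'" if "norm y \<le> L" for y
    using K[OF that] K'[OF that] by linarith
  ultimately show ?thesis
    using fenchel_conj_plus_eq_hopf \<omega>.fenchel_conj_plus_eq_hopf[OF K'] by fastforce
qed

lemma convex_on_hopf_plus_sq:
  assumes "0 \<le> C"
    and K_bound: "\<And>t y. t \<in> S \<Longrightarrow> norm y \<le> L \<Longrightarrow> \<bar>K t y\<bar> \<le> N"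
    and K_semiconcave: "\<And>y. norm y \<le> L \<Longrightarrow> convex_on S (\<lambda>t. C / 2 * t\<^sup>2 - K t y)"
  shows "convex_on (S \<times> UNIV) (\<lambda>p. hopf f (K (fst p)) (snd p) + C / 2 * (norm p)\<^sup>2)"
  unfolding hopf_def
proof (rule convex_on_cSup_add[where f = "\<lambda>y p. snd p \<bullet> y - real_of_ereal (f_conj y) - K (fst p) y"])
  show "conj_dom f \<noteq> {}" by (rule conj_dom_nonempty)
  show "bdd_above ((\<lambda>y. snd p \<bullet> y - real_of_ereal (f_conj y) - K (fst p) y) ` conj_dom f)"
    if "p \<in> S \<times> UNIV" for p
    using that K_bound by (intro bdd_above_hopf) auto
  fix y assume "y \<in> conj_dom f"
  then have "convex_on S (\<lambda>t. C / 2 * t\<^sup>2 - K t y)"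
    by (intro K_semiconcave norm_le_if_in_conj_dom)
  moreover have "convex_on UNIV (\<lambda>x. x \<bullet> y - real_of_ereal (f_conj y) + C / 2 * (norm x)\<^sup>2)"
    using \<open>0 \<le> C\<close> by (intro convex_on_add convex_on_inner_minus_const convex_on_cmul convex_on_norm_sq) simp
  ultimately have "convex_on (S \<times> UNIV) (\<lambda>p. (C / 2 * (fst p)\<^sup>2 - K (fst p) y)
      + (snd p \<bullet> y - real_of_ereal (f_conj y) + C / 2 * (norm (snd p))\<^sup>2))"
    by (rule convex_on_Times_add)
  moreover have "(norm p)\<^sup>2 = (fst p)\<^sup>2 + (norm (snd p))\<^sup>2" for p :: "real \<times> 'a"
    by (cases p) (simp add: norm_Pair)
  ultimately show "convex_on (S \<times> UNIV)
      (\<lambda>p. snd p \<bullet> y - real_of_ereal (f_conj y) - K (fst p) y + C / 2 * (norm p)\<^sup>2)"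
    by (auto elim!: convex_on_cong simp: algebra_simps)
qed

lemma two_stage_hopf_eq:
  fixes K :: "real \<Rightarrow> 'a \<Rightarrow> real" and u :: "real \<times> 'a \<Rightarrow> ereal"
  assumes tp: "tp \<in> {a..b}"
    and K_bound: "\<And>t y. t \<in> {a..b} \<Longrightarrow> norm y \<le> L \<Longrightarrow> \<bar>K t y\<bar> \<le> N"
    and u_eq: "\<And>t x. t \<in> {a..b} \<Longrightarrow> u (t, x) =
      (if t \<le> tp then fenchel (\<lambda>y. f_conj y + ereal (K t y)) x
       else fenchel (\<lambda>y. fenchel (\<lambda>z. u (tp, z)) y + ereal (K t y - K tp y)) x)"
    and t: "t \<in> {a..b}"
  shows "u (t, x) = ereal (if t \<le> tp then hopf f (K t) x
                            else hopf (hopf f (K tp)) (\<lambda>y. K t y - K tp y) x)"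
proof -
  have u_left: "u (s, x) = ereal (hopf f (K s) x)" if "s \<in> {a..b}" "s \<le> tp" for s x
    using that u_eq[of s x] fenchel_conj_plus_eq_hopf[OF K_bound[OF that(1)]] by simp
  show ?thesis
  proof (cases "t \<le> tp")
    case False
    have K_tp: "\<And>y. norm y \<le> L \<Longrightarrow> \<bar>K tp y\<bar> \<le> N" using K_bound tp by blast
    interpret \<omega>: hopf_datum "hopf f (K tp)" L by (rule hopf_datum_hopf[OF K_tp])
    have "(\<lambda>z. u (tp, z)) = (\<lambda>z. ereal (hopf f (K tp) z))" using u_left[OF tp] by simp
    then have "u (t, x) = fenchel (\<lambda>y. \<omega>.f_conj y + ereal (K t y - K tp y)) x"
      using u_eq[OF t] False by simp
    also have "\<dots> = ereal (hopf (hopf f (K tp)) (\<lambda>y. K t y - K tp y) x)"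
      by (rule \<omega>.fenchel_conj_plus_eq_hopf[where N = "N + N"])
        (use K_bound[OF t] K_tp in \<open>smt (verit)\<close>)
    finally show ?thesis using False by simp
  qed (use t u_left in simp)
qed

lemma convex_on_second_stage_plus_sq:
  assumes tp: "tp \<in> {a..b}" and "0 \<le> C"
    and K_bound: "\<And>t y. t \<in> {a..b} \<Longrightarrow> norm y \<le> L \<Longrightarrow> \<bar>K t y\<bar> \<le> N"
    and K_semiconcave: "\<And>y. norm y \<le> L \<Longrightarrow> convex_on {a..b} (\<lambda>t. C / 2 * t\<^sup>2 - K t y)"
  shows "convex_on ({tp..b} \<times> UNIV)
    (\<lambda>p. hopf (hopf f (K tp)) (\<lambda>y. K (fst p) y - K tp y) (snd p) + C / 2 * (norm p)\<^sup>2)"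
proof -
  have K_tp: "\<And>y. norm y \<le> L \<Longrightarrow> \<bar>K tp y\<bar> \<le> N" using K_bound tp by blast
  interpret \<omega>: hopf_datum "hopf f (K tp)" L by (rule hopf_datum_hopf[OF K_tp])
  show ?thesis
  proof (rule \<omega>.convex_on_hopf_plus_sq[OF \<open>0 \<le> C\<close>, where N = "N + N"])
    show "\<bar>K t y - K tp y\<bar> \<le> N + N" if "t \<in> {tp..b}" "norm y \<le> L" for t y
      using K_bound[of t y] K_tp[OF that(2)] that tp by fastforce
    fix y :: 'a assume "norm y \<le> L"
    then have "convex_on {tp..b} (\<lambda>t. C / 2 * t\<^sup>2 - K t y)"
      using tp by (intro convex_on_subset[OF K_semiconcave]) auto
    then have "convex_on {tp..b} (\<lambda>t. (C / 2 * t\<^sup>2 - K t y) + K tp y)"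
      by (rule convex_on_add) (simp add: convex_on_const)
    then show "convex_on {tp..b} (\<lambda>t. C / 2 * t\<^sup>2 - (K t y - K tp y))"
      by (simp add: algebra_simps)
  qed
qed

lemma convex_on_two_stage_hopf_plus_sq:
  assumes tp: "tp \<in> {a..b}" and "0 \<le> C"
    and K_bound: "\<And>t y. t \<in> {a..b} \<Longrightarrow> norm y \<le> L \<Longrightarrow> \<bar>K t y\<bar> \<le> N"
    and K_semiconcave: "\<And>y. norm y \<le> L \<Longrightarrow> convex_on {a..b} (\<lambda>t. C / 2 * t\<^sup>2 - K t y)"
  shows "convex_on ({a..b} \<times> UNIV)
    (\<lambda>p. (if fst p \<le> tp then hopf f (K (fst p)) (snd p)
          else hopf (hopf f (K tp)) (\<lambda>y. K (fst p) y - K tp y) (snd p)) + C / 2 * (norm p)\<^sup>2)"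
    (is "convex_on ?S ?h")
proof -
  have K_tp: "\<And>y. norm y \<le> L \<Longrightarrow> \<bar>K tp y\<bar> \<le> N" using K_bound tp by blast
  define F where "F = (\<lambda>p. hopf f (K (fst p)) (snd p) + C / 2 * (norm p)\<^sup>2)"
  define G where "G = (\<lambda>p. hopf (hopf f (K tp)) (\<lambda>y. K (fst p) y - K tp y) (snd p) + C / 2 * (norm p)\<^sup>2)"
  have F: "convex_on ?S F"
    unfolding F_def using \<open>0 \<le> C\<close> K_bound K_semiconcave by (rule convex_on_hopf_plus_sq)
  have h_right: "?h p = G p" if "tp \<le> fst p" for p
    using that hopf_hopf_zero[OF K_tp] by (cases "fst p = tp") (simp_all add: G_def)
  show ?thesis
  proof (rule convex_on_glue[where c = tp])
    show "convex ?S" by (simp add: convex_Times)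
    have "?S \<inter> {p. fst p \<le> tp} = {a..tp} \<times> UNIV" using tp by auto
    moreover have "convex_on ({a..tp} \<times> UNIV) F"
      by (rule convex_on_subset[OF F]) (use tp in \<open>auto simp: convex_Times\<close>)
    ultimately show "convex_on (?S \<inter> {p. fst p \<le> tp}) ?h"
      by (auto elim!: convex_on_cong simp: F_def)
    have "?S \<inter> {p. tp \<le> fst p} = {tp..b} \<times> UNIV" using tp by auto
    then have G_right: "convex_on (?S \<inter> {p. tp \<le> fst p}) G"
      unfolding G_def using convex_on_second_stage_plus_sq[OF assms] by simp
    show "convex_on (?S \<inter> {p. tp \<le> fst p}) ?h"
      by (rule convex_on_cong[OF G_right], rule h_right[symmetric]) simp
    show "convex_on ?S F" by (rule F)
    show "F p = ?h p" if "fst p = tp" for p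
      using that by (simp add: F_def)
    show "F p \<le> ?h p" if "p \<in> ?S" for p
    proof (cases "fst p \<le> tp")
      case False
      have "hopf f (\<lambda>y. K tp y + (K (fst p) y - K tp y)) (snd p)
          \<le> hopf (hopf f (K tp)) (\<lambda>y. K (fst p) y - K tp y) (snd p)"
        using K_tp K_bound that by (intro hopf_le_hopf_hopf[where N' = "N + N"]) fastforce+
      then show ?thesis
        using False by (simp add: F_def)
    qed (simp add: F_def)
  qed
qed
end

lemma hopf_datum_if_convex_lipschitz:
  assumes "convex_on UNIV \<sigma>" and "L-lipschitz_on UNIV \<sigma>"
  shows "hopf_datum \<sigma> L"
proof
  show "0 \<le> L" using assms(2) by (rule lipschitz_on_nonneg)
  have "\<sigma> q \<le> \<sigma> 0 + L * norm q" for q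
    using lipschitz_onD[OF assms(2), of q 0] by (simp add: dist_real_def)
  then show "\<exists>A. \<forall>q. \<sigma> q \<le> A + L * norm q" by blast
  show "\<exists>y c. \<forall>q. y \<bullet> q - c \<le> \<sigma> q"
    using convex_on_affine_minorant[OF assms(1) lipschitz_on_continuous_on[OF assms(2)]] by metis
qed

theorem theorem3p6:
  fixes T tp :: real
    and H :: "real \<times> 'a::euclidean_space \<Rightarrow> real"
    and \<sigma> :: "'a \<Rightarrow> real"
    and u :: "real \<times> 'a \<Rightarrow> ereal"
  assumes "T > 0"
    and "C1_on ({0..T} \<times> UNIV) H"
    and "convex_on UNIV \<sigma>"
    and "\<exists>L. L-lipschitz_on UNIV \<sigma>"
    and "tp \<in> {0<..<T}"
    and "cond_A2 H 0 tp"
    and "cond_A2 H tp T"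
    and u_def: "\<And>t x. u (t, x) =
      (if t \<le> tp
       then fenchel (\<lambda>y. fenchel (\<lambda>q. ereal (\<sigma> q)) y
                          + ereal (integral {0..t} (\<lambda>\<tau>. H (\<tau>, y)))) x
       else fenchel (\<lambda>y. fenchel (\<lambda>z. u (tp, z)) y
                          + ereal (integral {tp..t} (\<lambda>\<tau>. H (\<tau>, y)))) x)"
  shows "(\<forall>y\<in>{0<..<T} \<times> UNIV. \<bar>u y\<bar> \<noteq> \<infinity>)
         \<and> semiconvex_lin ({0<..<T} \<times> UNIV) (\<lambda>y. real_of_ereal (u y))"
proof -
  obtain L where "L-lipschitz_on UNIV \<sigma>" using assms(4) by blast
  with assms(3) interpret \<sigma>: hopf_datum \<sigma> L by (rule hopf_datum_if_convex_lipschitz)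
  define K where "K = (\<lambda>t y. integral {0..t} (\<lambda>\<tau>. H (\<tau>, y)))"
  have "0 \<le> T" using assms(1) by simp
  then obtain B M where "0 < B"
    and K_bound: "\<And>t y. t \<in> {0..T} \<Longrightarrow> norm y \<le> L \<Longrightarrow> \<bar>K t y\<bar> \<le> M"
    and K_semiconcave: "\<And>y. norm y \<le> L \<Longrightarrow> convex_on {0..T} (\<lambda>t. B / 2 * t\<^sup>2 - K t y)"
    unfolding K_def by (rule C1_on_time_integral_bounds[where L = L, OF assms(2)]) blast
  have tp: "tp \<in> {0..T}" using assms(5) by auto
  define v where "v = (\<lambda>p. if fst p \<le> tp then hopf \<sigma> (K (fst p)) (snd p)
                          else hopf (hopf \<sigma> (K tp)) (\<lambda>y. K (fst p) y - K tp y) (snd p))"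
  have u_eq: "u (t, x) = ereal (v (t, x))" if "t \<in> {0..T}" for t x
  proof (unfold v_def fst_conv snd_conv, rule \<sigma>.two_stage_hopf_eq[OF tp K_bound _ that])
    fix t x assume "t \<in> {0..T}"
    then show "u (t, x) = (if t \<le> tp then fenchel (\<lambda>y. \<sigma>.f_conj y + ereal (K t y)) x
        else fenchel (\<lambda>y. fenchel (\<lambda>z. u (tp, z)) y + ereal (K t y - K tp y)) x)"
      by (subst u_def) (auto simp: K_def C1_on_time_integral_diff[OF assms(2) tp])
  qed
  have "convex_on ({0..T} \<times> UNIV) (\<lambda>p. v p + B / 2 * (norm p)\<^sup>2)"
    unfolding v_def
    by (rule \<sigma>.convex_on_two_stage_hopf_plus_sq[OF tp _ K_bound K_semiconcave]) (use \<open>0 < B\<close> in simp)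
  then have "convex_on ({0<..<T} \<times> UNIV) (\<lambda>p. real_of_ereal (u p) + B / 2 * (norm p)\<^sup>2)"
    by (rule convex_on_cong[OF convex_on_subset]) (auto simp: u_eq convex_Times)
  moreover have "\<bar>u p\<bar> \<noteq> \<infinity>" if "p \<in> {0<..<T} \<times> UNIV" for p
    using that u_eq by (cases p) auto
  ultimately show ?thesis
    by (intro conjI ballI semiconvex_lin_if_convex_plus_sq[OF \<open>0 < B\<close>])
qed

end
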